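(* Let $\mathbb{R}^n$ be endowed with the $\ell_1$ norm and $\mathbb{R}^m$ with the Euclidean norm $\|\cdot\|_2$. Let $A\in\mathbb{R}^{m\times n}$, $b\in\mathbb{R}^m$ and $Q\in\mathbb{R}^{m\times m}$ symmetric positive semidefinite be such that $\begin{bmatrix}Q^{1/2}A\\ b^{\mathsf T}A\end{bmatrix}$ has at least two different columns. Let $f(u)=\frac12\langle Qu,u\rangle+\langle b,u\rangle$. Then $v=2Q^{1/2}u^\star$ is the same for all $u^\star\in\operatorname{Argmin}_{u\in\mathrm{conv}(A)}f(u)$, and \[ \mu^\star_{f,A}\ge\frac{\Phi_v(\bar A)^2}{4}>0,\qquad \bar A:=\begin{bmatrix}Q^{1/2}A\\ 2b^{\mathsf T}A\end{bmatrix}\in\mathbb{R}^{(m+1)\times n}. \]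
   Context: $\Delta_{n-1}=\{x\in\mathbb{R}^n_+:\sum_ix_i=1\}$; a matrix is identified with the set of its columns; $\mathrm{conv}(A)=\{Ax:x\in\Delta_{n-1}\}$. With $f^\star=\min_{x\in\Delta_{n-1}}f(Ax)$ and $Z^\star=\{z\in\Delta_{n-1}:f(Az)=f^\star\}$, $\mu^\star_{f,A}=\inf_{x\in\Delta_{n-1}\setminus Z^\star}\frac{2(f(Ax)-f^\star)}{\mathrm{dist}(x,Z^\star)^2}$, where $\mathrm{dist}(x,Z^\star)=\min_{z\in Z^\star}\|x-z\|_1$. For $v\in\mathbb{R}^m$ and $\bar w=(w,w_{m+1})\in\mathbb{R}^{m+1}$ put $\|\bar w\|_v=\sqrt{\|w\|_2^2+|\langle v,w\rangle+w_{m+1}|}$, and for nonempty $F,G$ put $\mathrm{dist}_v(F,G)=\min_{\bar w\in F,\bar w'\in G}\|\bar w-\bar w'\|_v$. For $\bar A\in\mathbb{R}^{(m+1)\times n}$ with at least two different columns let $F(v)=\operatorname{Argmin}_{\bar w\in\mathrm{conv}(\bar A)}\langle(v,1),\bar w\rangle$ and $\Phi_v(\bar A)=\min\{\mathrm{dist}_v(G,\mathrm{conv}(\bar A\setminus G)):G\text{ a face of }F(v),\ \emptyset\ne G\ne\mathrm{conv}(\bar A)\}$, where $\bar A\setminus G$ denotes the columns of $\bar A$ not in $G$. *)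

theory Defs
  imports "HOL-Analysis.Analysis"
begin

text \<open>Vectors of R^n are of type real^'n, matrices A in R^{m x n} of type real^'n^'m
 (rows indexed by 'm). Vectors of R^{m+1} are pairs (w, w_{m+1}) :: (real^'m) \<times> real.\<close>

definition std_simplex :: "(real^'n) set" where
  "std_simplex = {x. (\<forall>i. 0 \<le> x $ i) \<and> (\<Sum>i\<in>UNIV. x $ i) = 1}"

definition convA :: "real^'n^'m \<Rightarrow> (real^'m) set" where
  "convA A = {A *v x | x. x \<in> std_simplex}"

definition l1dist :: "real^'n \<Rightarrow> real^'n \<Rightarrow> real" where
  "l1dist x z = (\<Sum>i\<in>UNIV. \<bar>x $ i - z $ i\<bar>)"

definition fstar :: "(real^'m \<Rightarrow> real) \<Rightarrow> real^'n^'m \<Rightarrow> real" where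
  "fstar f A = (INF x\<in>std_simplex. f (A *v x))"

definition Zstar :: "(real^'m \<Rightarrow> real) \<Rightarrow> real^'n^'m \<Rightarrow> (real^'n) set" where
  "Zstar f A = {z \<in> std_simplex. f (A *v z) = fstar f A}"

definition dist_Z :: "(real^'m \<Rightarrow> real) \<Rightarrow> real^'n^'m \<Rightarrow> real^'n \<Rightarrow> real" where
  "dist_Z f A x = (INF z\<in>Zstar f A. l1dist x z)"

text \<open>mu^star_{f,A}; an infimum in the extended reals (empty infimum = +infinity)\<close>
definition mu_star :: "(real^'m \<Rightarrow> real) \<Rightarrow> real^'n^'m \<Rightarrow> ereal" where
  "mu_star f A = (INF x\<in>std_simplex - Zstar f A.
      ereal (2 * (f (A *v x) - fstar f A) / (dist_Z f A x)\<^sup>2))"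

definition vnorm :: "real^'m \<Rightarrow> (real^'m) \<times> real \<Rightarrow> real" where
  "vnorm v wb = sqrt ((norm (fst wb))\<^sup>2 + \<bar>v \<bullet> fst wb + snd wb\<bar>)"

definition dist_v :: "real^'m \<Rightarrow> ((real^'m) \<times> real) set \<Rightarrow> ((real^'m) \<times> real) set \<Rightarrow> real" where
  "dist_v v F G = (INF p\<in>F \<times> G. vnorm v (fst p - snd p))"

text \<open>Columns of a matrix Abar in R^{(m+1) x n}, given as a function from column indices.\<close>
definition cols :: "('n \<Rightarrow> (real^'m) \<times> real) \<Rightarrow> ((real^'m) \<times> real) set" where
  "cols Ab = range Ab"

definition Fv :: "real^'m \<Rightarrow> ('n \<Rightarrow> (real^'m) \<times> real) \<Rightarrow> ((real^'m) \<times> real) set" where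
  "Fv v Ab = {wb \<in> convex hull cols Ab.
      \<forall>wb' \<in> convex hull cols Ab. v \<bullet> fst wb + snd wb \<le> v \<bullet> fst wb' + snd wb'}"

definition Phi :: "real^'m \<Rightarrow> ('n \<Rightarrow> (real^'m) \<times> real) \<Rightarrow> real" where
  "Phi v Ab = Inf {dist_v v G (convex hull (cols Ab - G)) | G.
      G face_of Fv v Ab \<and> G \<noteq> {} \<and> G \<noteq> convex hull cols Ab}"

definition sym_psd :: "real^'m^'m \<Rightarrow> bool" where
  "sym_psd Q \<longleftrightarrow> transpose Q = Q \<and> (\<forall>x. 0 \<le> x \<bullet> (Q *v x))"

definition psd_sqrt :: "real^'m^'m \<Rightarrow> real^'m^'m" where
  "psd_sqrt Q = (THE S. sym_psd S \<and> S ** S = Q)"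

end

theory Submission
  imports Defs
begin

(* With S the positive semidefinite square root of Q, 2 f(A x) = |S A x|^2 + 2 <b, A x> is the
   function h(w, t) = |w|^2 + t evaluated at the point Abar x of the polytope P = conv(Abar).
   At a minimiser w0 of h over P, with v = 2 fst w0, the first-order condition says that (v, 1)
   is minimised over P at w0, and h(w) - h(w0) is exactly the squared v-norm of w - w0; in
   particular fst w0 = S u is the same for all minimisers.
   For x outside the solution set, let z be an l1-nearest solution and write
   x - z = s (alpha - beta) with alpha, beta in the simplex of disjoint supports, so that
   |x - z|_1 = 2 s. The smallest face G of P containing Abar beta is a face of F(v), and no vertex
   on the support of alpha lies in G, since otherwise weight could be moved to bring z closer to x.
   Hence Abar alpha lies in conv(Abar minus G), Phi_v is at most the v-norm of
   Abar alpha - Abar beta, and s Phi_v is at most the v-norm of s (Abar alpha - Abar beta) =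
   Abar x - Abar z, whose square is 2 (f(A x) - min f). *)


section \<open>Symmetric matrices and the positive semidefinite square root\<close>

lemma nonneg_quadratic_imp_linear_coeff_zero:
  fixes c K :: real
  assumes "\<And>t. 0 \<le> 2*t*c + t\<^sup>2*K"
  shows "c = 0"
proof (rule ccontr)
  assume c: "c \<noteq> 0"
  define d where "d = \<bar>K\<bar> + 1"
  have d: "d > 0" "\<bar>K\<bar> < d" by (auto simp: d_def)
  have "0 \<le> d * (2*(-c/d)*c + (-c/d)\<^sup>2*K) * d" using d assms[of "-c/d"] by simp
  also have "\<dots> = -2*c\<^sup>2*d + c\<^sup>2*K" using d by (simp add: field_simps power2_eq_square)
  finally have "2*c\<^sup>2*d \<le> c\<^sup>2*K" by simp
  moreover have "c\<^sup>2*K < c\<^sup>2 * d" using d c by (simp add: abs_less_iff)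
  moreover have "0 < c\<^sup>2 * d" using c d by simp
  ultimately show False by linarith
qed

lemma nonneg_quadratic_imp_linear_coeff_nonneg:
  fixes c K :: real
  assumes "\<And>t. 0 < t \<Longrightarrow> t \<le> 1 \<Longrightarrow> 0 \<le> t * c + t\<^sup>2 * K" and K: "0 \<le> K"
  shows "0 \<le> c"
proof (rule ccontr)
  assume "\<not> 0 \<le> c"
  define t where "t = min 1 (- c / (K + 1))"
  have "c / (K + 1) < 0" using \<open>\<not> 0 \<le> c\<close> K by (intro divide_neg_pos) auto
  hence t: "0 < t" "t \<le> 1" by (auto simp: t_def)
  have "t \<le> - c / (K + 1)" by (simp add: t_def)
  hence "t * (K + 1) \<le> - c" using K mult_right_mono[of t "- c / (K + 1)" "K + 1"] by simp
  hence "t * (c + t * K) < 0" using t by (intro mult_pos_neg) (auto simp: algebra_simps)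
  thus False using assms(1)[OF t] by (simp add: algebra_simps power2_eq_square)
qed

lemma symmetric_matrix_inner:
  fixes M :: "real^'m^'m"
  assumes "transpose M = M"
  shows "x \<bullet> (M *v y) = (M *v x) \<bullet> y"
  by (metis assms dot_lmul_matrix vector_transpose_matrix)

lemma symmetric_quadratic_form_add:
  fixes M :: "real^'m^'m"
  assumes "transpose M = M"
  shows "(x + t *\<^sub>R y) \<bullet> (M *v (x + t *\<^sub>R y))
           = x \<bullet> (M *v x) + 2*t*(y \<bullet> (M *v x)) + t\<^sup>2 * (y \<bullet> (M *v y))"
  using symmetric_matrix_inner[OF assms, of x y]
  by (simp add: matrix_vector_right_distrib matrix_vector_mult_scaleR inner_add_left inner_add_right
      inner_commute power2_eq_square algebra_simps)

lemma sym_psd_kernel: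
  fixes S :: "real^'m^'m"
  assumes "sym_psd S" "x \<bullet> (S *v x) = 0"
  shows "S *v x = 0"
proof -
  have sym: "transpose S = S" and psd: "\<And>z. 0 \<le> z \<bullet> (S *v z)"
    using assms(1) by (auto simp: sym_psd_def)
  have "y \<bullet> (S *v x) = 0" for y
    by (rule nonneg_quadratic_imp_linear_coeff_zero[where K = "y \<bullet> (S *v y)"])
       (use psd[of "x + _ *\<^sub>R y"] symmetric_quadratic_form_add[OF sym, of x _ y] assms(2) in simp)
  from this[of "S *v x"] show ?thesis by simp
qed

text \<open>Stationarity of the Rayleigh quotient at a maximiser e: moving e towards an orthogonal
  direction y of U does not change it to first order.\<close>

lemma symmetric_matrix_rayleigh_max_orthogonal:
  fixes M :: "real^'m^'m"
  assumes sym: "transpose M = M" and U: "subspace U" and eU: "e \<in> U" and ee: "e \<bullet> e = 1"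
    and emax: "\<And>y. y \<in> U \<Longrightarrow> norm y = 1 \<Longrightarrow> y \<bullet> (M *v y) \<le> e \<bullet> (M *v e)"
    and yU: "y \<in> U" and ey: "e \<bullet> y = 0"
  shows "e \<bullet> (M *v y) = 0"
proof -
  define l where "l = e \<bullet> (M *v e)"
  have "- (y \<bullet> (M *v e)) = 0"
  proof (rule nonneg_quadratic_imp_linear_coeff_zero[where K = "l * (y \<bullet> y) - y \<bullet> (M *v y)"])
    fix t :: real
    define z where "z = e + t *\<^sub>R y"
    have zz: "z \<bullet> z = 1 + t\<^sup>2 * (y \<bullet> y)"
      using ee ey by (simp add: z_def inner_add_left inner_add_right inner_commute power2_eq_square)
    hence "z \<bullet> z > 0" by (simp add: add_pos_nonneg)
    hence nz: "norm z > 0" by (simp add: inner_gt_zero_iff)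
    have "z /\<^sub>R norm z \<in> U" using eU yU U unfolding z_def by (simp add: subspace_add subspace_scale)
    hence "(z \<bullet> (M *v z)) / (norm z)\<^sup>2 \<le> l" using emax[of "z /\<^sub>R norm z"] nz
      by (simp add: l_def matrix_vector_mult_scaleR power2_eq_square divide_inverse algebra_simps)
    hence "z \<bullet> (M *v z) \<le> l * (z \<bullet> z)" using nz by (simp add: divide_le_eq power2_norm_eq_inner)
    moreover have "z \<bullet> (M *v z) = l + 2*t*(y \<bullet> (M *v e)) + t\<^sup>2 * (y \<bullet> (M *v y))"
      using symmetric_quadratic_form_add[OF sym, of e t y] unfolding z_def l_def by simp
    ultimately show "0 \<le> 2*t*(- (y \<bullet> (M *v e))) + t\<^sup>2*(l * (y \<bullet> y) - y \<bullet> (M *v y))"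
      using zz by (simp add: algebra_simps)
  qed
  thus ?thesis using symmetric_matrix_inner[OF sym, of e y] by (simp add: inner_commute)
qed

lemma symmetric_matrix_eigenvector_in_invariant_subspace:
  fixes M :: "real^'m^'m"
  assumes sym: "transpose M = M" and U: "subspace U" and inv: "\<And>x. x \<in> U \<Longrightarrow> M *v x \<in> U"
    and "U \<noteq> {0}"
  obtains e where "e \<in> U" "norm e = 1" "M *v e = (e \<bullet> (M *v e)) *\<^sub>R e"
proof -
  define K where "K = U \<inter> sphere 0 1"
  obtain x0 where x0: "x0 \<in> U" "x0 \<noteq> 0" using \<open>U \<noteq> {0}\<close> subspace_0[OF U] by blast
  have "x0 /\<^sub>R norm x0 \<in> K" using x0 U unfolding K_def by (simp add: subspace_scale)
  moreover have "compact K" unfolding K_def by (simp add: U closed_subspace closed_Int_compact)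
  moreover have "continuous_on K (\<lambda>x. x \<bullet> (M *v x))"
    by (intro continuous_intros matrix_vector_mult_linear_continuous_on)
  ultimately obtain e where eK: "e \<in> K" and emax: "\<And>y. y \<in> K \<Longrightarrow> y \<bullet> (M *v y) \<le> e \<bullet> (M *v e)"
    using continuous_attains_sup[of K] by blast
  define l where "l = e \<bullet> (M *v e)"
  have eU: "e \<in> U" and ee: "e \<bullet> e = 1" using eK by (auto simp: K_def norm_eq_1)
  define r where "r = M *v e - l *\<^sub>R e"
  have "r \<in> U" using inv[OF eU] eU U by (simp add: r_def subspace_diff subspace_scale)
  moreover have er: "e \<bullet> r = 0" using ee by (simp add: r_def l_def inner_diff_right)
  ultimately have "e \<bullet> (M *v r) = 0"
    using symmetric_matrix_rayleigh_max_orthogonal[OF sym U eU ee] emax by (simp add: K_def)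
  hence "(M *v e) \<bullet> r = 0" using symmetric_matrix_inner[OF sym, of e r] by simp
  hence "r \<bullet> r = 0" using er by (simp add: r_def inner_diff_left)
  thus ?thesis using that eU eK by (auto simp: r_def l_def K_def)
qed

definition orthonormal_eigenbasis :: "real^'m^'m \<Rightarrow> (real^'m) set \<Rightarrow> bool" where
  "orthonormal_eigenbasis M B \<longleftrightarrow> finite B \<and> pairwise orthogonal B
     \<and> (\<forall>e\<in>B. norm e = 1 \<and> (\<exists>c. M *v e = c *\<^sub>R e))
     \<and> (\<forall>y. (\<forall>e\<in>B. e \<bullet> y = 0) \<longrightarrow> y = 0)"

lemma orthonormal_eigenbasis_eigenvalue:
  assumes "orthonormal_eigenbasis M B" "e \<in> B"
  shows "M *v e = (e \<bullet> (M *v e)) *\<^sub>R e"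
proof -
  obtain c where c: "M *v e = c *\<^sub>R e" and "e \<bullet> e = 1"
    using assms unfolding orthonormal_eigenbasis_def norm_eq_1 by blast
  thus ?thesis by simp
qed

lemma orthonormal_eigenbasis_coeff:
  assumes B: "orthonormal_eigenbasis M B" and e: "e \<in> B"
  shows "e \<bullet> (\<Sum>e'\<in>B. g e' *\<^sub>R e') = g e"
proof -
  have "e \<bullet> (\<Sum>e'\<in>B. g e' *\<^sub>R e') = (\<Sum>e'\<in>B. if e' = e then g e else 0)"
    unfolding inner_sum_right
  proof (rule sum.cong)
    fix e' assume "e' \<in> B"
    thus "e \<bullet> g e' *\<^sub>R e' = (if e' = e then g e else 0)"
      using B e by (auto simp: orthonormal_eigenbasis_def norm_eq_1 pairwise_def orthogonal_def)
  qed simp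
  also have "\<dots> = g e" using B e by (simp add: orthonormal_eigenbasis_def)
  finally show ?thesis .
qed

lemma orthonormal_eigenbasis_expansion:
  assumes B: "orthonormal_eigenbasis M B"
  shows "y = (\<Sum>e\<in>B. (e \<bullet> y) *\<^sub>R e)"
proof -
  have "e \<bullet> (y - (\<Sum>e\<in>B. (e \<bullet> y) *\<^sub>R e)) = 0" if "e \<in> B" for e
    using orthonormal_eigenbasis_coeff[OF B that] by (simp add: inner_diff_right)
  hence "y - (\<Sum>e\<in>B. (e \<bullet> y) *\<^sub>R e) = 0" using B unfolding orthonormal_eigenbasis_def by blast
  thus ?thesis by simp
qed

lemma orthonormal_eigenbasis_apply:
  assumes B: "orthonormal_eigenbasis M B"
  shows "M *v y = (\<Sum>e\<in>B. ((e \<bullet> (M *v e)) * (e \<bullet> y)) *\<^sub>R e)"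
proof -
  have "M *v y = (\<Sum>e\<in>B. (e \<bullet> y) *\<^sub>R (M *v e))"
    by (subst orthonormal_eigenbasis_expansion[OF B, of y]) (simp add: vec.sum matrix_vector_mult_scaleR)
  also have "\<dots> = (\<Sum>e\<in>B. ((e \<bullet> (M *v e)) * (e \<bullet> y)) *\<^sub>R e)"
    by (intro sum.cong refl) (subst orthonormal_eigenbasis_eigenvalue[OF B], simp_all)
  finally show ?thesis .
qed

text \<open>Spectral theorem: an orthonormal set of eigenvectors of maximal size spans the space, since
  its orthogonal complement is invariant.\<close>

lemma symmetric_matrix_orthonormal_eigenbasis:
  fixes M :: "real^'m^'m"
  assumes sym: "transpose M = M"
  obtains B where "orthonormal_eigenbasis M B"
proof -
  define E where "E B \<longleftrightarrow> finite B \<and> pairwise orthogonal B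
      \<and> (\<forall>e\<in>B. norm e = 1 \<and> (\<exists>c. M *v e = c *\<^sub>R e))" for B :: "(real^'m) set"
  have "card B \<le> DIM(real^'m)" if "E B" for B
    using that independent_bound pairwise_orthogonal_independent[of B] by (force simp: E_def)
  hence "\<forall>B. E B \<longrightarrow> card B < DIM(real^'m) + 1" by (simp add: less_Suc_eq_le)
  moreover have "E {}" by (simp add: E_def)
  ultimately obtain B where B: "E B" and Bmax: "\<And>B'. E B' \<Longrightarrow> card B' \<le> card B"
    using ex_has_greatest_nat[of E "{}" card "DIM(real^'m) + 1"] by blast
  have "y = 0" if y: "\<forall>e\<in>B. e \<bullet> y = 0" for y
  proof (rule ccontr)
    assume "y \<noteq> 0"
    define U where "U = {y. \<forall>e\<in>B. e \<bullet> y = 0}"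
    have U: "subspace U" unfolding U_def subspace_def by (auto simp: inner_add_right)
    have "M *v x \<in> U" if "x \<in> U" for x
    proof -
      have "e \<bullet> (M *v x) = (e \<bullet> (M *v e)) * (e \<bullet> x)" if "e \<in> B" for e
        using symmetric_matrix_inner[OF sym, of e x] B that unfolding E_def norm_eq_1
        by (metis inner_scaleR_left inner_scaleR_right mult.right_neutral)
      thus ?thesis using \<open>x \<in> U\<close> by (simp add: U_def)
    qed
    moreover have "U \<noteq> {0}" using y \<open>y \<noteq> 0\<close> by (auto simp: U_def)
    ultimately obtain e where eU: "e \<in> U" and e: "norm e = 1" "M *v e = (e \<bullet> (M *v e)) *\<^sub>R e"
      using symmetric_matrix_eigenvector_in_invariant_subspace[OF sym U] by blast
    have "e \<notin> B" using eU e(1) by (auto simp: U_def norm_eq_1)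
    moreover have "E (insert e B)"
      using B eU e by (auto simp: E_def U_def pairwise_insert orthogonal_def inner_commute)
    ultimately show False using Bmax[of "insert e B"] B by (simp add: E_def)
  qed
  thus ?thesis using that B unfolding orthonormal_eigenbasis_def E_def by blast
qed

lemma matrix_vector_mult_outer_sum:
  "(\<chi> i j. \<Sum>e\<in>B. l e * e$i * e$j) *v y = (\<Sum>e\<in>B. (l e * (e \<bullet> y)) *\<^sub>R e)"
proof -
  have "((\<chi> i j. \<Sum>e\<in>B. l e * e$i * e$j) *v y) $ i = (\<Sum>e\<in>B. (l e * (e \<bullet> y)) *\<^sub>R e) $ i" for i
  proof -
    have "((\<chi> i j. \<Sum>e\<in>B. l e * e$i * e$j) *v y) $ i = (\<Sum>j\<in>UNIV. \<Sum>e\<in>B. l e * e$i * e$j * y$j)"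
      by (simp add: matrix_vector_mult_def sum_distrib_right)
    also have "\<dots> = (\<Sum>e\<in>B. \<Sum>j\<in>UNIV. l e * e$i * e$j * y$j)" by (rule sum.swap)
    also have "\<dots> = (\<Sum>e\<in>B. (l e * (e \<bullet> y)) *\<^sub>R e) $ i"
      by (simp add: inner_vec_def sum_distrib_left sum_component mult_ac)
    finally show ?thesis .
  qed
  thus ?thesis by (simp add: vec_eq_iff)
qed

lemma sym_psd_sqrt_exists:
  fixes Q :: "real^'m^'m"
  assumes "sym_psd Q"
  obtains S where "sym_psd S" "S ** S = Q"
proof -
  have sym: "transpose Q = Q" and psd: "\<And>z. 0 \<le> z \<bullet> (Q *v z)" using assms by (auto simp: sym_psd_def)
  obtain B where B: "orthonormal_eigenbasis Q B"
    using symmetric_matrix_orthonormal_eigenbasis[OF sym] by blast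
  define l where "l e = sqrt (e \<bullet> (Q *v e))" for e
  define S :: "real^'m^'m" where "S = (\<chi> i j. \<Sum>e\<in>B. l e * e$i * e$j)"
  have Sv: "S *v y = (\<Sum>e\<in>B. (l e * (e \<bullet> y)) *\<^sub>R e)" for y
    unfolding S_def by (rule matrix_vector_mult_outer_sum)
  have "transpose S = S"
    by (simp add: S_def transpose_def vec_eq_iff mult.commute mult.left_commute)
  moreover have "0 \<le> z \<bullet> (S *v z)" for z
    unfolding Sv inner_sum_right
    by (intro sum_nonneg) (simp add: l_def psd inner_commute mult.assoc)
  moreover have "S *v (S *v y) = Q *v y" for y
  proof -
    have "S *v (S *v y) = (\<Sum>e\<in>B. (l e * (e \<bullet> (S *v y))) *\<^sub>R e)" by (rule Sv)
    also have "\<dots> = (\<Sum>e\<in>B. ((e \<bullet> (Q *v e)) * (e \<bullet> y)) *\<^sub>R e)"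
    proof (rule sum.cong)
      fix e assume "e \<in> B"
      have "l e * (e \<bullet> (S *v y)) = (l e)\<^sup>2 * (e \<bullet> y)"
        unfolding Sv orthonormal_eigenbasis_coeff[OF B \<open>e \<in> B\<close>] by (simp add: power2_eq_square)
      thus "(l e * (e \<bullet> (S *v y))) *\<^sub>R e = ((e \<bullet> (Q *v e)) * (e \<bullet> y)) *\<^sub>R e"
        by (simp add: l_def psd)
    qed simp
    also have "\<dots> = Q *v y" by (rule orthonormal_eigenbasis_apply[OF B, symmetric])
    finally show ?thesis .
  qed
  hence "S ** S = Q" by (simp add: matrix_eq flip: matrix_vector_mul_assoc)
  ultimately show ?thesis using that[of S] by (simp add: sym_psd_def)
qed

lemma sym_psd_sqrt_unique:
  fixes S T :: "real^'m^'m"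
  assumes S: "sym_psd S" and T: "sym_psd T" and eq: "S ** S = T ** T"
  shows "S = T"
proof -
  define M where "M = S - T"
  have sM: "transpose M = M" using S T by (simp add: M_def sym_psd_def transpose_def vec_eq_iff)
  obtain B where B: "orthonormal_eigenbasis M B" using symmetric_matrix_orthonormal_eigenbasis[OF sM] .
  txt \<open>For an eigenvector e with eigenvalue \<mu>, the identity S S - T T = S M + M T gives
    \<mu> (e \<bullet> S e + e \<bullet> T e) = 0, and both terms are nonnegative.\<close>
  have "e \<bullet> (M *v e) = 0" if e: "e \<in> B" for e
  proof (rule ccontr)
    define \<mu> where "\<mu> = e \<bullet> (M *v e)"
    assume "e \<bullet> (M *v e) \<noteq> 0"
    hence mu: "\<mu> \<noteq> 0" by (simp add: \<mu>_def)
    have Me: "M *v e = \<mu> *\<^sub>R e" unfolding \<mu>_def by (rule orthonormal_eigenbasis_eigenvalue[OF B e])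
    have "S *v (S *v e) = T *v (T *v e)" by (simp add: matrix_vector_mul_assoc eq)
    hence "S *v (M *v e) + M *v (T *v e) = 0"
      by (simp add: M_def matrix_vector_mult_diff_rdistrib matrix_vector_right_distrib vec.diff)
    hence "e \<bullet> (\<mu> *\<^sub>R (S *v e) + M *v (T *v e)) = 0" by (simp add: Me matrix_vector_mult_scaleR)
    moreover have "e \<bullet> (M *v (T *v e)) = \<mu> * (e \<bullet> (T *v e))"
      using symmetric_matrix_inner[OF sM, of e "T *v e"] by (simp add: Me)
    ultimately have "\<mu> * (e \<bullet> (S *v e) + e \<bullet> (T *v e)) = 0"
      by (simp add: inner_add_right algebra_simps)
    moreover have "0 \<le> e \<bullet> (S *v e)" "0 \<le> e \<bullet> (T *v e)" using S T by (auto simp: sym_psd_def)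
    ultimately have "e \<bullet> (S *v e) = 0" "e \<bullet> (T *v e) = 0" using mu by simp_all
    hence "S *v e = 0" "T *v e = 0" using sym_psd_kernel S T by blast+
    hence "\<mu> *\<^sub>R e = 0" by (simp add: M_def matrix_vector_mult_diff_rdistrib flip: Me)
    thus False using mu B e by (auto simp: orthonormal_eigenbasis_def)
  qed
  hence "M *v y = 0" for y using orthonormal_eigenbasis_apply[OF B, of y] by simp
  thus ?thesis by (simp add: matrix_eq M_def matrix_vector_mult_diff_rdistrib)
qed

lemma psd_sqrt:
  fixes Q :: "real^'m^'m"
  assumes "sym_psd Q"
  shows "sym_psd (psd_sqrt Q)" "psd_sqrt Q ** psd_sqrt Q = Q"
proof -
  have "\<exists>!S. sym_psd S \<and> S ** S = Q"
    using sym_psd_sqrt_exists[OF assms] sym_psd_sqrt_unique by metis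
  from theI'[OF this] show "sym_psd (psd_sqrt Q)" "psd_sqrt Q ** psd_sqrt Q = Q"
    by (simp_all add: psd_sqrt_def)
qed

section \<open>Combinations of columns and faces of their convex hull\<close>

definition comb :: "('n::finite \<Rightarrow> 'a::real_vector) \<Rightarrow> real^'n \<Rightarrow> 'a" where
  "comb p x = (\<Sum>j\<in>UNIV. x$j *\<^sub>R p j)"

lemma linear_comb: "linear (comb p)"
  by (rule linearI) (simp_all add: comb_def scaleR_add_left sum.distrib scaleR_sum_right)

lemma comb_axis: "comb p (axis k 1) = p k"
proof -
  have "axis k 1 $ j *\<^sub>R p j = (if j = k then p k else 0)" for j by (simp add: axis_def)
  thus ?thesis by (simp add: comb_def)
qed

lemma comb_linear_image: "linear h \<Longrightarrow> comb (\<lambda>j. h (q j)) x = h (comb q x)"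
  by (simp add: comb_def linear_sum linear_scale)

lemma matrix_vector_mult_eq_comb: "(A :: real^'n^'m) *v x = comb (\<lambda>j. column j A) x"
  by (simp add: vec_eq_iff matrix_vector_mult_def comb_def column_def sum_component mult.commute)

lemma continuous_on_comb: "continuous_on X (comb (p :: 'n::finite \<Rightarrow> 'a::real_normed_vector))"
  unfolding comb_def by (intro continuous_intros)

lemma axis_in_std_simplex: "axis k 1 \<in> std_simplex"
  by (simp add: std_simplex_def axis_def)

lemma std_simplex_nonneg: "x \<in> std_simplex \<Longrightarrow> 0 \<le> x$j"
  by (simp add: std_simplex_def)

lemma convex_std_simplex: "convex std_simplex"
  unfolding convex_def std_simplex_def
  by (simp add: sum.distrib flip: sum_distrib_left)

lemma compact_std_simplex: "compact (std_simplex :: (real^'n) set)"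
proof -
  have "(std_simplex :: (real^'n) set) = (\<Inter>i. {x. 0 \<le> x $ i}) \<inter> {x. (\<Sum>i\<in>UNIV. x $ i) = 1}"
    by (auto simp: std_simplex_def)
  moreover have "closed \<dots>"
    using closed_halfspace_component_ge_cart[of 0]
    by (intro closed_Int closed_INT closed_Collect_eq continuous_intros) auto
  moreover have "(std_simplex :: (real^'n) set) \<subseteq> cball 0 1"
  proof
    fix x :: "real^'n" assume x: "x \<in> std_simplex"
    have "norm x \<le> (\<Sum>i\<in>UNIV. \<bar>x $ i\<bar>)" by (rule norm_le_l1_cart)
    thus "x \<in> cball 0 1" using x by (simp add: std_simplex_def)
  qed
  ultimately show ?thesis by (metis compact_eq_bounded_closed bounded_cball bounded_subset)
qed

lemma comb_in_convex:
  assumes "x \<in> std_simplex" "convex C" "\<And>j. 0 < x $ j \<Longrightarrow> p j \<in> C"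
  shows "comb p x \<in> C"
proof -
  define J where "J = {j. 0 < x $ j}"
  have zero: "x $ j = 0" if "j \<notin> J" for j
    using that std_simplex_nonneg[OF assms(1), of j] by (simp add: J_def)
  have "comb p x = (\<Sum>j\<in>J. x$j *\<^sub>R p j)"
    unfolding comb_def by (rule sum.mono_neutral_right) (auto simp: zero)
  also have "\<dots> \<in> C"
  proof (rule convex_sum[OF _ assms(2)])
    have "sum (($) x) J = (\<Sum>j\<in>UNIV. x $ j)" by (rule sum.mono_neutral_left) (auto simp: zero)
    thus "sum (($) x) J = 1" using assms(1) by (simp add: std_simplex_def)
  qed (use assms(3) in \<open>auto simp: J_def\<close>)
  finally show ?thesis .
qed

lemma convex_hull_range_eq_comb_image: "convex hull (range p) = comb p ` std_simplex"
proof
  show "convex hull range p \<subseteq> comb p ` std_simplex"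
    by (intro hull_minimal convex_linear_image linear_comb convex_std_simplex)
       (metis axis_in_std_simplex comb_axis image_eqI image_subsetI)
  show "comb p ` std_simplex \<subseteq> convex hull range p"
    using comb_in_convex[OF _ convex_convex_hull] by (metis hull_inc image_subsetI rangeI)
qed

lemma face_of_convex_sum_mem:
  fixes T S :: "'a::real_vector set"
  assumes T: "T face_of S" and cS: "convex S" and fin: "finite I"
    and u0: "\<And>i. i \<in> I \<Longrightarrow> 0 \<le> u i" and u1: "sum u I = 1" and qS: "\<And>i. i \<in> I \<Longrightarrow> q i \<in> S"
    and wT: "(\<Sum>i\<in>I. u i *\<^sub>R q i) \<in> T" and k: "k \<in> I" "0 < u k"
  shows "q k \<in> T"
proof -
  define w where "w = (\<Sum>i\<in>I. u i *\<^sub>R q i)"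
  have split: "w = u k *\<^sub>R q k + (\<Sum>i\<in>I - {k}. u i *\<^sub>R q i)"
    unfolding w_def using fin k by (simp add: sum.remove)
  have su: "sum u (I - {k}) = 1 - u k" using fin k u1 by (simp add: sum_diff1)
  show ?thesis
  proof (cases "u k = 1")
    case True
    hence "\<forall>i\<in>I - {k}. u i = 0" using su u0 fin sum_nonneg_eq_0_iff[of "I - {k}" u] by auto
    hence "w = q k" using split True by simp
    thus ?thesis using wT w_def by simp
  next
    case False
    have uk1: "u k < 1" using False su sum_nonneg[of "I - {k}" u] u0 by fastforce
    define r where "r = (\<Sum>i\<in>I - {k}. (u i / (1 - u k)) *\<^sub>R q i)"
    have rS: "r \<in> S" unfolding r_def
      by (rule convex_sum) (use fin cS su uk1 u0 qS in \<open>auto simp: sum_divide_distrib[symmetric]\<close>)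
    have wseg: "w = (1 - u k) *\<^sub>R r + u k *\<^sub>R q k"
      using split uk1 by (simp add: r_def scaleR_sum_right)
    moreover have "w \<in> open_segment r (q k)" if "r \<noteq> q k"
      using that k uk1 wseg by (auto simp: in_segment)
    ultimately show ?thesis
      using face_ofD[OF T _ rS qS[OF k(1)]] wT w_def
      by (cases "r = q k") (auto simp: algebra_simps simp flip: scaleR_add_left)
  qed
qed

lemma face_of_comb_mem:
  fixes p :: "'n::finite \<Rightarrow> 'a::real_vector"
  assumes "T face_of S" "convex S" "\<And>j. p j \<in> S" "x \<in> std_simplex" "comb p x \<in> T" "0 < x $ k"
  shows "p k \<in> T"
  using face_of_convex_sum_mem[OF assms(1,2) finite[of "UNIV :: 'n set"], of "($) x" p k] assms(3-)
  by (simp add: comb_def std_simplex_def)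

lemma rel_interior_vertex_positive_weight:
  fixes p :: "'n::finite \<Rightarrow> 'a::euclidean_space"
  assumes "convex G" "G \<subseteq> convex hull (range p)" "b \<in> rel_interior G" "p k \<in> G"
  obtains \<gamma> where "\<gamma> \<in> std_simplex" "0 < \<gamma>$k" "comb p \<gamma> = b"
proof -
  obtain e where e: "1 < e" "(1 - e) *\<^sub>R p k + e *\<^sub>R b \<in> G"
    using bspec[OF convex_rel_interior_if2[OF assms(1,3)] hull_inc[OF assms(4)]] by blast
  hence "(1 - e) *\<^sub>R p k + e *\<^sub>R b \<in> comb p ` std_simplex"
    using assms(2) convex_hull_range_eq_comb_image by blast
  then obtain \<kappa> where \<kappa>: "\<kappa> \<in> std_simplex" "comb p \<kappa> = (1 - e) *\<^sub>R p k + e *\<^sub>R b"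
    by (metis imageE)
  define \<gamma> where "\<gamma> = ((e - 1) / e) *\<^sub>R axis k 1 + (1 / e) *\<^sub>R \<kappa>"
  show ?thesis
  proof
    show "\<gamma> \<in> std_simplex" unfolding \<gamma>_def
      using e convexD[OF convex_std_simplex axis_in_std_simplex \<kappa>(1), of "(e - 1) / e" "1 / e"]
      by (simp add: diff_divide_distrib)
    show "0 < \<gamma>$k"
      using e std_simplex_nonneg[OF \<kappa>(1), of k] by (simp add: \<gamma>_def axis_def add_pos_nonneg)
    have "comb p \<gamma> = ((e - 1) / e) *\<^sub>R p k + (1 / e) *\<^sub>R ((1 - e) *\<^sub>R p k + e *\<^sub>R b)"
      by (simp add: \<gamma>_def linear_add[OF linear_comb] linear_scale[OF linear_comb] comb_axis \<kappa>(2))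
    also have "\<dots> = b" using e by (simp add: scaleR_add_right algebra_simps diff_divide_distrib)
    finally show "comb p \<gamma> = b" .
  qed
qed

lemma polytope_minimal_face_rel_interior:
  fixes P :: "'a::euclidean_space set"
  assumes "polytope P" "b \<in> P"
  obtains G where "G face_of P" "b \<in> rel_interior G" "\<And>K. K face_of P \<Longrightarrow> b \<in> K \<Longrightarrow> G \<subseteq> K"
proof -
  define G where "G = \<Inter>{K. K face_of P \<and> b \<in> K}"
  have G: "G face_of P"
    unfolding G_def using assms polytope_imp_convex face_of_refl by (intro face_of_Inter) auto
  have min: "\<And>K. K face_of P \<Longrightarrow> b \<in> K \<Longrightarrow> G \<subseteq> K" and "b \<in> G" unfolding G_def by blast+
  txt \<open>A point on the relative boundary of the polyhedron G lies in a facet, a smaller face.\<close>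
  have "b \<in> rel_interior G"
  proof (rule ccontr)
    assume "b \<notin> rel_interior G"
    have "polyhedron G" using face_of_polytope_polytope[OF assms(1) G] polytope_imp_polyhedron by blast
    then obtain K where K: "K facet_of G" "b \<in> K"
      using rel_interior_of_polyhedron \<open>b \<notin> rel_interior G\<close> \<open>b \<in> G\<close> by blast
    hence "G \<subseteq> K" using min face_of_trans[OF facet_of_imp_face_of G] by blast
    hence "K = G" using facet_of_imp_subset[OF K(1)] by blast
    thus False using K(1) by simp
  qed
  thus ?thesis using that G min by blast
qed

section \<open>The l1 geometry of the simplex\<close>

lemma std_simplex_le_one:
  assumes "x \<in> std_simplex" shows "x$j \<le> 1"
proof -
  have "x$j \<le> (\<Sum>i\<in>UNIV. x$i)" by (rule member_le_sum) (use assms in \<open>auto simp: std_simplex_def\<close>)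
  thus ?thesis using assms by (simp add: std_simplex_def)
qed

lemma continuous_on_l1dist: "continuous_on X (l1dist x)"
  unfolding l1dist_def by (intro continuous_intros)

lemma l1dist_eq_0_iff: "l1dist x z = 0 \<longleftrightarrow> x = z"
  by (simp add: l1dist_def vec_eq_iff sum_nonneg_eq_0_iff)

lemma std_simplex_diff_decomposition:
  fixes x z :: "real^'n"
  assumes x: "x \<in> std_simplex" and z: "z \<in> std_simplex" and "x \<noteq> z"
  obtains s \<alpha> \<beta> where "0 < s" "s \<le> 1" "\<alpha> \<in> std_simplex" "\<beta> \<in> std_simplex"
    "x - z = s *\<^sub>R (\<alpha> - \<beta>)" "l1dist x z = 2 * s"
    "\<And>j. s * \<alpha>$j = max (x$j - z$j) 0" "\<And>j. s * \<beta>$j = max (z$j - x$j) 0"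
proof -
  define pos where "pos j = max (x$j - z$j) 0" for j
  define neg where "neg j = max (z$j - x$j) 0" for j
  define s where "s = (\<Sum>j\<in>UNIV. pos j)"
  have pn: "pos j - neg j = x$j - z$j" "pos j + neg j = \<bar>x$j - z$j\<bar>" "0 \<le> pos j" "0 \<le> neg j"
    "pos j \<le> x$j" for j
    using std_simplex_nonneg[OF x, of j] std_simplex_nonneg[OF z, of j]
    by (auto simp: pos_def neg_def max_def)
  have "(\<Sum>j\<in>UNIV. pos j - neg j) = 0" using x z by (simp add: pn std_simplex_def sum_subtractf)
  hence sneg: "(\<Sum>j\<in>UNIV. neg j) = s" by (simp add: s_def sum_subtractf)
  have l1: "l1dist x z = 2 * s" unfolding l1dist_def pn(2)[symmetric] sum.distrib sneg s_def by simp
  have "s \<noteq> 0" using l1 l1dist_eq_0_iff[of x z] \<open>x \<noteq> z\<close> by simp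
  hence s0: "0 < s" using sum_nonneg[of UNIV pos] pn(3) by (simp add: s_def order_le_less)
  have "s \<le> (\<Sum>j\<in>UNIV. x$j)" unfolding s_def by (intro sum_mono pn(5))
  hence "s \<le> 1" using x by (simp add: std_simplex_def)
  moreover have "(\<chi> j. pos j / s) \<in> std_simplex" "(\<chi> j. neg j / s) \<in> std_simplex"
    using s0 sneg pn(3,4) by (simp_all add: std_simplex_def s_def flip: sum_divide_distrib)
  moreover have "x - z = s *\<^sub>R ((\<chi> j. pos j / s) - (\<chi> j. neg j / s))"
    using s0 by (simp add: vec_eq_iff right_diff_distrib flip: pn(1))
  ultimately show ?thesis using that[of s] s0 l1 by (simp add: pos_def neg_def)
qed

lemma std_simplex_exchange:
  fixes x z \<beta> \<gamma> :: "real^'n"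
  assumes x: "x \<in> std_simplex" and z: "z \<in> std_simplex" and \<beta>: "\<beta> \<in> std_simplex"
    and \<gamma>: "\<gamma> \<in> std_simplex" and neg: "\<And>j. s * \<beta>$j = max (z$j - x$j) 0" and "0 \<le> \<delta>" "\<delta> \<le> s"
  shows "z + \<delta> *\<^sub>R (\<gamma> - \<beta>) \<in> std_simplex"
proof -
  have "0 \<le> z$j + \<delta> * \<gamma>$j - \<delta> * \<beta>$j" for j
  proof -
    have "\<delta> * \<beta>$j \<le> s * \<beta>$j" "0 \<le> \<delta> * \<gamma>$j"
      using assms(6,7) std_simplex_nonneg[OF \<beta>, of j] std_simplex_nonneg[OF \<gamma>, of j]
      by (simp_all add: mult_right_mono)
    moreover have "max (z$j - x$j) 0 \<le> z$j"
      using std_simplex_nonneg[OF x, of j] std_simplex_nonneg[OF z, of j] by simp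
    ultimately show ?thesis using neg[of j] by linarith
  qed
  moreover have "(\<Sum>j\<in>UNIV. z$j + \<delta> * \<gamma>$j - \<delta> * \<beta>$j) = 1"
    using z \<beta> \<gamma> by (simp add: std_simplex_def sum.distrib sum_subtractf flip: sum_distrib_left)
  ultimately show ?thesis by (simp add: std_simplex_def algebra_simps)
qed

lemma l1dist_exchange:
  fixes x z \<beta> \<gamma> :: "real^'n"
  assumes x: "x \<in> std_simplex" and z: "z \<in> std_simplex" and \<beta>: "\<beta> \<in> std_simplex"
    and \<gamma>: "\<gamma> \<in> std_simplex" and s: "0 < s" and neg: "\<And>j. s * \<beta>$j = max (z$j - x$j) 0"
    and k: "z$k < x$k" "0 < \<gamma>$k"
  obtains \<delta> where "z + \<delta> *\<^sub>R (\<gamma> - \<beta>) \<in> std_simplex"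
    "l1dist x (z + \<delta> *\<^sub>R (\<gamma> - \<beta>)) < l1dist x z"
proof
  define \<delta> where "\<delta> = min s (x$k - z$k)"
  have \<delta>: "0 < \<delta>" "\<delta> \<le> s" "\<delta> \<le> x$k - z$k" using s k by (auto simp: \<delta>_def)
  show "z + \<delta> *\<^sub>R (\<gamma> - \<beta>) \<in> std_simplex"
    using std_simplex_exchange[OF x z \<beta> \<gamma> neg] \<delta> by simp
  have \<beta>\<delta>: "\<delta> * \<beta>$j \<le> s * \<beta>$j" for j
    using \<delta> std_simplex_nonneg[OF \<beta>, of j] by (simp add: mult_right_mono)
  have \<gamma>\<delta>: "0 \<le> \<delta> * \<gamma>$j" "\<delta> * \<gamma>$k \<le> \<delta>" for j
    using \<delta> std_simplex_nonneg[OF \<gamma>, of j] std_simplex_le_one[OF \<gamma>, of k] by simp_all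
  txt \<open>On coordinate k the added weight does not overshoot x, so there the distance decreases
    instead of increasing.\<close>
  have comp: "\<bar>x$j - (z + \<delta> *\<^sub>R (\<gamma> - \<beta>))$j\<bar>
      \<le> \<bar>x$j - z$j\<bar> - \<delta> * \<beta>$j + \<delta> * \<gamma>$j - (if j = k then 2 * (\<delta> * \<gamma>$k) else 0)" for j
  proof (cases "j = k")
    case True
    have "\<beta>$k = 0" using neg[of k] k(1) s by simp
    thus ?thesis using True \<gamma>\<delta> \<delta>(3) k(1) by (simp add: abs_if algebra_simps)
  next
    case False
    show ?thesis
    proof (cases "z$j \<le> x$j")
      case True
      hence "\<beta>$j = 0" using neg[of j] s by simp
      thus ?thesis using False \<gamma>\<delta>(1)[of j] abs_triangle_ineq4[of "x$j - z$j" "\<delta> * \<gamma>$j"]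
        by (simp add: algebra_simps)
    qed (use False \<gamma>\<delta>(1)[of j] \<beta>\<delta>[of j] neg[of j] in \<open>simp add: abs_if algebra_simps\<close>)
  qed
  have "l1dist x (z + \<delta> *\<^sub>R (\<gamma> - \<beta>)) \<le> (\<Sum>j\<in>UNIV. \<bar>x$j - z$j\<bar> - \<delta> * \<beta>$j + \<delta> * \<gamma>$j
      - (if j = k then 2 * (\<delta> * \<gamma>$k) else 0))"
    unfolding l1dist_def by (intro sum_mono comp)
  also have "\<dots> = l1dist x z - \<delta> * (\<Sum>j\<in>UNIV. \<beta>$j) + \<delta> * (\<Sum>j\<in>UNIV. \<gamma>$j) - 2 * (\<delta> * \<gamma>$k)"
    by (simp add: l1dist_def sum.distrib sum_subtractf sum_distrib_left)
  also have "\<dots> < l1dist x z" using \<beta> \<gamma> \<delta>(1) k(2) by (simp add: std_simplex_def)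
  finally show "l1dist x (z + \<delta> *\<^sub>R (\<gamma> - \<beta>)) < l1dist x z" .
qed

section \<open>The v-norm and the constant Phi\<close>

lemma vnorm_eq: "vnorm v d = sqrt ((norm (fst d))\<^sup>2 + \<bar>(v, 1) \<bullet> d\<bar>)"
  by (cases d) (simp add: vnorm_def inner_Pair)

lemma vnorm_pos: "d \<noteq> 0 \<Longrightarrow> 0 < vnorm v d"
  by (cases d) (auto simp: vnorm_def add_nonneg_eq_0_iff add_pos_nonneg less_le zero_prod_def)

lemma vnorm_eq_0_iff: "vnorm v d = 0 \<longleftrightarrow> d = 0"
proof (cases "d = 0")
  case False
  thus ?thesis using vnorm_pos[of d v] by simp
qed (simp add: vnorm_def)

lemma vnorm_minus_commute: "vnorm v (a - b) = vnorm v (b - a)"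
proof -
  have "vnorm v (- d) = vnorm v d" for d by (simp add: vnorm_eq)
  thus ?thesis by (metis minus_diff_eq)
qed

lemma continuous_on_vnorm: "continuous_on X (vnorm v)"
  unfolding vnorm_def by (intro continuous_intros)

lemma vnorm_scaleR_ge:
  assumes "0 \<le> s" "s \<le> 1"
  shows "s * vnorm v d \<le> vnorm v (s *\<^sub>R d)"
proof -
  have "s\<^sup>2 * \<bar>(v, 1) \<bullet> d\<bar> \<le> s * \<bar>(v, 1) \<bullet> d\<bar>"
    using assms by (simp add: power2_eq_square mult_right_le_one_le mult_left_le_one_le mult_right_mono)
  hence "(s * vnorm v d)\<^sup>2 \<le> (vnorm v (s *\<^sub>R d))\<^sup>2"
    using assms by (simp add: vnorm_eq power_mult_distrib abs_mult distrib_left)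
  thus ?thesis by (rule power2_le_imp_le) (simp add: vnorm_def)
qed

lemma dist_v_le: "a \<in> F \<Longrightarrow> b \<in> G \<Longrightarrow> dist_v v F G \<le> vnorm v (a - b)"
  unfolding dist_v_def
  by (rule cINF_lower2[where x = "(a, b)"]) (auto intro: bdd_belowI[of _ 0] simp: vnorm_def)

lemma dist_v_pos:
  fixes p :: "'n::finite \<Rightarrow> (real^'m) \<times> real"
  assumes G: "G face_of convex hull (range p)" "G \<noteq> {}" "G \<noteq> convex hull (range p)"
  shows "0 < dist_v v G (convex hull (range p - G))"
proof -
  define H where "H = convex hull (range p - G)"
  have cG: "compact G"
    using face_of_imp_compact[OF convex_convex_hull _ G(1)] by (simp add: compact_convex_hull finite_imp_compact)
  have "range p - G \<noteq> {}"
    using G(3) hull_minimal[of "range p" G convex] face_of_imp_convex[OF G(1)] face_of_imp_subset[OF G(1)]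
    by auto
  hence "H \<noteq> {}" by (simp add: H_def)
  have "G \<inter> H = {}"
  proof (rule ccontr)
    assume "G \<inter> H \<noteq> {}"
    then obtain w where wG: "w \<in> G" and wH: "w \<in> H" by blast
    have finR: "finite (range p - G)" by simp
    obtain u where u0: "\<forall>x\<in>range p - G. 0 \<le> u x" and u1: "sum u (range p - G) = 1"
      and uw: "(\<Sum>x\<in>range p - G. u x *\<^sub>R x) = w"
      using wH unfolding H_def convex_hull_finite[OF finR] by blast
    have "\<exists>k\<in>range p - G. u k \<noteq> 0" using u1 by (metis sum.neutral zero_neq_one)
    then obtain k where k: "k \<in> range p - G" "0 < u k" using u0 by (auto simp: less_le)
    have "id k \<in> G"
      by (rule face_of_convex_sum_mem[OF G(1) convex_convex_hull finR, of u id k])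
         (use u0 u1 uw wG k in \<open>auto intro: hull_inc\<close>)
    thus False using k by simp
  qed
  moreover have "compact (G \<times> H)" using cG by (simp add: H_def compact_Times compact_convex_hull finite_imp_compact)
  moreover have "continuous_on (G \<times> H) (\<lambda>pr. vnorm v (fst pr - snd pr))"
    by (intro continuous_on_compose2[OF continuous_on_vnorm] continuous_intros) auto
  ultimately obtain pr0 where pr0: "pr0 \<in> G \<times> H"
    and pmin: "\<And>pr. pr \<in> G \<times> H \<Longrightarrow> vnorm v (fst pr0 - snd pr0) \<le> vnorm v (fst pr - snd pr)"
    using continuous_attains_inf[of "G \<times> H"] \<open>G \<noteq> {}\<close> \<open>H \<noteq> {}\<close> by blast
  have "0 < vnorm v (fst pr0 - snd pr0)" using pr0 \<open>G \<inter> H = {}\<close> by (intro vnorm_pos) auto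
  also have "\<dots> \<le> dist_v v G H"
    unfolding dist_v_def using pmin pr0 by (intro cINF_greatest) auto
  finally show ?thesis by (simp add: H_def)
qed

lemma Fv_face_of:
  fixes p :: "'n::finite \<Rightarrow> (real^'m) \<times> real"
  shows "Fv v p face_of convex hull (range p)" "Fv v p \<noteq> {}"
proof -
  define P where "P = convex hull (range p)"
  have "compact P" "P \<noteq> {}" by (simp_all add: P_def compact_convex_hull finite_imp_compact)
  moreover have "continuous_on P ((\<bullet>) (v, 1))" by (intro continuous_intros)
  ultimately obtain w0 where w0: "w0 \<in> P" "\<And>w. w \<in> P \<Longrightarrow> (v, 1) \<bullet> w0 \<le> (v, 1) \<bullet> w"
    by (metis continuous_attains_inf)
  have "Fv v p = P \<inter> {w. (v, 1) \<bullet> w = (v, 1) \<bullet> w0}"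
    using w0 by (auto simp: Fv_def cols_def P_def inner_prod_def intro: order.antisym)
  moreover have "P \<inter> {w. (v, 1) \<bullet> w = (v, 1) \<bullet> w0} face_of P"
    using w0 by (intro face_of_Int_supporting_hyperplane_ge) (auto simp: P_def)
  ultimately show "Fv v p face_of convex hull (range p)" "Fv v p \<noteq> {}"
    using w0 by (auto simp: P_def)
qed

lemma
  fixes p :: "'n::finite \<Rightarrow> (real^'m) \<times> real"
  assumes "p i \<noteq> p j"
  shows Phi_pos: "0 < Phi v p"
    and Phi_le_dist_v: "\<And>G. \<lbrakk>G face_of Fv v p; G \<noteq> {}; G \<noteq> convex hull (range p)\<rbrakk>
           \<Longrightarrow> Phi v p \<le> dist_v v G (convex hull (range p - G))"
proof -
  define P where "P = convex hull (range p)"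
  define T where "T = {dist_v v G (convex hull (range p - G)) | G. G face_of Fv v p \<and> G \<noteq> {} \<and> G \<noteq> P}"
  have Phi_T: "Phi v p = Inf T" by (simp add: Phi_def T_def cols_def P_def)
  have FvP: "Fv v p face_of P" using Fv_face_of by (simp add: P_def)
  have "polytope P" unfolding P_def polytope_def by (intro exI[of _ "range p"]) simp
  hence "finite {G. G face_of P}" by (rule finite_polytope_faces)
  moreover have "T \<subseteq> (\<lambda>G. dist_v v G (convex hull (range p - G))) ` {G. G face_of P}"
    unfolding T_def using face_of_trans[OF _ FvP] by blast
  ultimately have finT: "finite T" by (rule finite_surj)
  have posT: "0 < t" if t: "t \<in> T" for t
  proof -
    obtain G where "G face_of Fv v p" "G \<noteq> {}" "G \<noteq> P" "t = dist_v v G (convex hull (range p - G))"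
      using t unfolding T_def by blast
    thus ?thesis using dist_v_pos[OF face_of_trans[OF _ FvP[unfolded P_def]]] by (simp add: P_def)
  qed
  have "compact P" "convex P" by (simp_all add: P_def compact_convex_hull finite_imp_compact)
  hence "compact (Fv v p)" "convex (Fv v p)"
    using FvP by (auto intro: face_of_imp_compact face_of_imp_convex)
  then obtain e where "e extreme_point_of Fv v p"
    using extreme_point_exists_convex Fv_face_of(2) by blast
  moreover have "{e} \<noteq> P"
    using assms hull_inc[of "p i" "range p" convex] hull_inc[of "p j" "range p" convex]
    by (metis P_def rangeI singletonD)
  ultimately have "T \<noteq> {}" unfolding T_def using face_of_singleton by blast
  show "0 < Phi v p" unfolding Phi_T using finT \<open>T \<noteq> {}\<close> posT by (simp add: cInf_eq_Min)
  show "Phi v p \<le> dist_v v G (convex hull (range p - G))"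
    if "G face_of Fv v p" "G \<noteq> {}" "G \<noteq> convex hull (range p)" for G
    unfolding Phi_T using that finT by (intro cInf_lower bdd_below_finite) (auto simp: T_def P_def)
qed

section \<open>Error bound under quadratic growth in the v-norm\<close>

locale vnorm_growth =
  fixes f :: "real^'m \<Rightarrow> real" and A :: "real^'n^'m"
    and p :: "'n \<Rightarrow> (real^'k) \<times> real" and v :: "real^'k" and z0 :: "real^'n"
  assumes z0_simplex: "z0 \<in> std_simplex"
    and growth: "\<And>x. x \<in> std_simplex
      \<Longrightarrow> 2 * (f (A *v x) - f (A *v z0)) = (vnorm v (comb p x - comb p z0))\<^sup>2"
    and supporting: "\<And>x. x \<in> std_simplex \<Longrightarrow> (v, 1) \<bullet> comb p z0 \<le> (v, 1) \<bullet> comb p x"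
begin

lemma min_value:
  assumes "x \<in> std_simplex" shows "f (A *v z0) \<le> f (A *v x)"
proof -
  have "0 \<le> 2 * (f (A *v x) - f (A *v z0))" using growth[OF assms] by simp
  thus ?thesis by simp
qed

lemma fstar_eq: "fstar f A = f (A *v z0)"
  unfolding fstar_def using z0_simplex min_value by (intro cInf_eq_minimum) auto

lemma min_value_iff_comb_eq:
  assumes "z \<in> std_simplex"
  shows "f (A *v z) = f (A *v z0) \<longleftrightarrow> comb p z = comb p z0"
  using growth[OF assms] vnorm_eq_0_iff[of v "comb p z - comb p z0"] by auto

lemma Zstar_eq: "Zstar f A = {z \<in> std_simplex. comb p z = comb p z0}"
  by (auto simp: Zstar_def fstar_eq min_value_iff_comb_eq)

lemma minimizer_comb_eq: "x \<in> std_simplex \<Longrightarrow> f (A *v x) \<le> f (A *v z0) \<Longrightarrow> comb p x = comb p z0"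
  using min_value min_value_iff_comb_eq by (meson order.antisym)

lemma comb_z0_in_Fv: "comb p z0 \<in> Fv v p"
  using z0_simplex supporting
  by (auto simp: Fv_def cols_def convex_hull_range_eq_comb_image inner_prod_def)

text \<open>If p k were in G, the image of \<beta> could be rewritten with positive weight on p k, and
  moving z by the corresponding exchange of weights would bring it closer to x.\<close>

lemma nearest_point_vertex_notin:
  assumes x: "x \<in> std_simplex" and z: "z \<in> Zstar f A"
    and nearest: "\<And>z'. z' \<in> Zstar f A \<Longrightarrow> l1dist x z \<le> l1dist x z'"
    and \<beta>: "\<beta> \<in> std_simplex" "0 < s" "\<And>j. s * \<beta>$j = max (z$j - x$j) 0"
    and G: "convex G" "G \<subseteq> convex hull (range p)" "comb p \<beta> \<in> rel_interior G"
    and k: "z$k < x$k"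
  shows "p k \<notin> G"
proof
  assume "p k \<in> G"
  then obtain \<gamma> where \<gamma>: "\<gamma> \<in> std_simplex" "0 < \<gamma>$k" "comb p \<gamma> = comb p \<beta>"
    using rel_interior_vertex_positive_weight[OF G] by blast
  have zS: "z \<in> std_simplex" using z by (simp add: Zstar_eq)
  obtain \<delta> where z': "z + \<delta> *\<^sub>R (\<gamma> - \<beta>) \<in> std_simplex"
    "l1dist x (z + \<delta> *\<^sub>R (\<gamma> - \<beta>)) < l1dist x z"
    using l1dist_exchange[OF x zS \<beta>(1) \<gamma>(1) \<beta>(2,3) k \<gamma>(2)] by blast
  have "comb p (z + \<delta> *\<^sub>R (\<gamma> - \<beta>)) = comb p z"
    using \<gamma>(3) by (simp add: linear_add[OF linear_comb] linear_scale[OF linear_comb] linear_diff[OF linear_comb])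
  hence "z + \<delta> *\<^sub>R (\<gamma> - \<beta>) \<in> Zstar f A" using z z'(1) by (simp add: Zstar_eq)
  thus False using nearest z'(2) by (simp add: not_le[symmetric])
qed

lemma Fv_subface_rel_interior:
  assumes z: "z \<in> Zstar f A" and \<beta>: "\<beta> \<in> std_simplex" "\<And>j. 0 < \<beta>$j \<Longrightarrow> 0 < z$j"
  obtains G where "G face_of Fv v p" "comb p \<beta> \<in> rel_interior G"
proof -
  define P where "P = convex hull (range p)"
  have FvP: "Fv v p face_of P" and "convex P" using Fv_face_of by (simp_all add: P_def)
  have "comb p \<beta> \<in> P" using \<beta>(1) by (simp add: P_def convex_hull_range_eq_comb_image)
  moreover have "polytope P" unfolding P_def polytope_def by (intro exI[of _ "range p"]) simp
  ultimately obtain G where G: "G face_of P" "comb p \<beta> \<in> rel_interior G"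
    and Gmin: "\<And>K. K face_of P \<Longrightarrow> comb p \<beta> \<in> K \<Longrightarrow> G \<subseteq> K"
    using polytope_minimal_face_rel_interior by blast
  have "p j \<in> Fv v p" if "0 < \<beta>$j" for j
  proof (rule face_of_comb_mem[OF FvP \<open>convex P\<close>])
    show "z \<in> std_simplex" "comb p z \<in> Fv v p" using z comb_z0_in_Fv by (simp_all add: Zstar_eq)
  qed (use \<beta>(2) that in \<open>auto simp: P_def hull_inc\<close>)
  hence "comb p \<beta> \<in> Fv v p" using face_of_imp_convex[OF FvP] by (intro comb_in_convex[OF \<beta>(1)])
  hence "G face_of Fv v p" using Gmin[OF FvP] G(1) face_of_imp_subset[OF FvP] face_of_subset by blast
  thus ?thesis using that G(2) by blast
qed

lemma nearest_point_bound:
  assumes pij: "p i \<noteq> p j" and x: "x \<in> std_simplex" "x \<notin> Zstar f A" and z: "z \<in> Zstar f A"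
    and nearest: "\<And>z'. z' \<in> Zstar f A \<Longrightarrow> l1dist x z \<le> l1dist x z'"
  shows "Phi v p * l1dist x z \<le> 2 * vnorm v (comb p x - comb p z0)"
proof -
  have zS: "z \<in> std_simplex" and zy: "comb p z = comb p z0" using z by (simp_all add: Zstar_eq)
  obtain s \<alpha> \<beta> where s: "0 < s" "s \<le> 1" and \<alpha>\<beta>: "\<alpha> \<in> std_simplex" "\<beta> \<in> std_simplex"
    and xz: "x - z = s *\<^sub>R (\<alpha> - \<beta>)" "l1dist x z = 2 * s"
    and pos: "\<And>j. s * \<alpha>$j = max (x$j - z$j) 0" and neg: "\<And>j. s * \<beta>$j = max (z$j - x$j) 0"
    by (rule std_simplex_diff_decomposition[OF x(1) zS]) (use x(2) z in auto)
  have "0 < z$j" if "0 < \<beta>$j" for j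
    using neg[of j] mult_pos_pos[OF s(1) that] std_simplex_nonneg[OF x(1), of j]
    by (simp add: max_def split: if_splits)
  then obtain G where GFv: "G face_of Fv v p" and G: "comb p \<beta> \<in> rel_interior G"
    using Fv_subface_rel_interior[OF z \<alpha>\<beta>(2)] by blast
  have GP: "G \<subseteq> convex hull (range p)"
    using face_of_imp_subset[OF GFv] face_of_imp_subset[OF Fv_face_of(1)] by blast
  have notin: "p k \<notin> G" if "0 < \<alpha>$k" for k
  proof (rule nearest_point_vertex_notin[OF x(1) z nearest \<alpha>\<beta>(2) s(1) neg face_of_imp_convex[OF GFv] GP G])
    show "z$k < x$k" using pos[of k] mult_pos_pos[OF s(1) that] by (simp add: max_def split: if_splits)
  qed
  have "(\<Sum>j\<in>UNIV. \<alpha>$j) = 1" using \<alpha>\<beta>(1) by (simp add: std_simplex_def)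
  then obtain k where "\<alpha>$k \<noteq> 0" by (metis (full_types) sum.neutral zero_neq_one)
  hence "G \<noteq> convex hull (range p)"
    using notin std_simplex_nonneg[OF \<alpha>\<beta>(1), of k] hull_inc[of "p k" "range p"] by force
  have "comb p \<alpha> \<in> convex hull (range p - G)"
    using notin by (intro comb_in_convex[OF \<alpha>\<beta>(1) convex_convex_hull]) (simp add: hull_inc)
  have "comb p \<beta> \<in> G" using G rel_interior_subset by blast
  hence "Phi v p \<le> dist_v v G (convex hull (range p - G))"
    using Phi_le_dist_v[OF pij GFv] \<open>G \<noteq> convex hull (range p)\<close> by blast
  also have "\<dots> \<le> vnorm v (comb p \<beta> - comb p \<alpha>)"
    by (rule dist_v_le[OF \<open>comb p \<beta> \<in> G\<close> \<open>comb p \<alpha> \<in> _\<close>])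
  also have "\<dots> = vnorm v (comb p \<alpha> - comb p \<beta>)" by (rule vnorm_minus_commute)
  finally have "s * Phi v p \<le> s * vnorm v (comb p \<alpha> - comb p \<beta>)" using s by simp
  also have "\<dots> \<le> vnorm v (s *\<^sub>R (comb p \<alpha> - comb p \<beta>))" using s by (intro vnorm_scaleR_ge) auto
  also have "s *\<^sub>R (comb p \<alpha> - comb p \<beta>) = comb p x - comb p z0"
    using xz(1) zy linear_diff[OF linear_comb, of p x z] linear_scale[OF linear_comb, of p s "\<alpha> - \<beta>"]
      linear_diff[OF linear_comb, of p \<alpha> \<beta>] by simp
  finally show ?thesis using xz(2) by (simp add: mult.commute)
qed

lemma growth_ratio_ge:
  assumes "p i \<noteq> p j" and x: "x \<in> std_simplex - Zstar f A"
  shows "(Phi v p)\<^sup>2 / 4 \<le> 2 * (f (A *v x) - fstar f A) / (dist_Z f A x)\<^sup>2"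
proof -
  have "Zstar f A = std_simplex \<inter> {z. comb p z = comb p z0}" by (auto simp: Zstar_eq)
  moreover have "closed {z. comb p z = comb p z0}"
    by (intro closed_Collect_eq continuous_on_comb continuous_on_const)
  ultimately have "compact (Zstar f A)" by (simp add: compact_Int_closed compact_std_simplex)
  moreover have "Zstar f A \<noteq> {}" using z0_simplex by (auto simp: Zstar_eq)
  ultimately obtain z where z: "z \<in> Zstar f A"
    and nearest: "\<And>z'. z' \<in> Zstar f A \<Longrightarrow> l1dist x z \<le> l1dist x z'"
    using continuous_attains_inf[of "Zstar f A" "l1dist x"] continuous_on_l1dist by metis
  have dZ: "dist_Z f A x = l1dist x z"
    unfolding dist_Z_def using z nearest by (intro cInf_eq_minimum) auto
  have "0 < l1dist x z"
    using x z l1dist_eq_0_iff[of x z] by (auto simp: l1dist_def less_le sum_nonneg)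
  hence "0 \<le> Phi v p * l1dist x z" using Phi_pos[OF assms(1), where v = v] by simp
  hence "(Phi v p * l1dist x z)\<^sup>2 \<le> (2 * vnorm v (comb p x - comb p z0))\<^sup>2"
    using nearest_point_bound[OF assms(1) _ _ z nearest] x by (intro power_mono) auto
  also have "\<dots> = 4 * (2 * (f (A *v x) - fstar f A))"
    using growth x by (simp add: power_mult_distrib fstar_eq)
  finally have *: "(Phi v p * l1dist x z)\<^sup>2 \<le> 4 * (2 * (f (A *v x) - fstar f A))" .
  have "(Phi v p)\<^sup>2 / 4 = (Phi v p * l1dist x z)\<^sup>2 / (4 * (l1dist x z)\<^sup>2)"
    using \<open>0 < l1dist x z\<close> by (simp add: power_mult_distrib)
  also have "\<dots> \<le> 4 * (2 * (f (A *v x) - fstar f A)) / (4 * (l1dist x z)\<^sup>2)"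
    by (rule divide_right_mono[OF *]) simp
  also have "\<dots> = 2 * (f (A *v x) - fstar f A) / (dist_Z f A x)\<^sup>2"
    by (simp only: dZ mult_divide_mult_cancel_left_if) simp
  finally show ?thesis .
qed

lemma mu_star_ge: "p i \<noteq> p j \<Longrightarrow> ereal ((Phi v p)\<^sup>2 / 4) \<le> mu_star f A"
  unfolding mu_star_def using growth_ratio_ge by (intro INF_greatest) simp

end

section \<open>Convex quadratic objectives\<close>

lemma psd_sqrt_quadratic_form:
  assumes "sym_psd Q"
  shows "(Q *v u) \<bullet> u = (norm (psd_sqrt Q *v u))\<^sup>2"
proof -
  define S where "S = psd_sqrt Q"
  have "transpose S = S" "S ** S = Q" using psd_sqrt[OF assms] by (simp_all add: S_def sym_psd_def)
  hence "(Q *v u) \<bullet> u = (S *v u) \<bullet> (S *v u)"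
    using symmetric_matrix_inner[of S u "S *v u"] by (metis inner_commute matrix_vector_mul_assoc)
  thus ?thesis by (simp add: S_def power2_norm_eq_inner)
qed

lemma comb_lifted_columns:
  fixes A :: "real^'n^'m" and S :: "real^'m^'k"
  shows "comb (\<lambda>j. (S *v column j A, c * (b \<bullet> column j A))) x = (S *v (A *v x), c * (b \<bullet> (A *v x)))"
proof -
  have "linear (\<lambda>u. (S *v u, c * (b \<bullet> u)))"
    by (intro linearI) (simp_all add: matrix_vector_right_distrib matrix_vector_mult_scaleR
        inner_add_right algebra_simps)
  from comb_linear_image[OF this, of "\<lambda>j. column j A" x] show ?thesis
    by (simp add: matrix_vector_mult_eq_comb)
qed

lemma sq_norm_plus_last_min:
  fixes C :: "((real^'m) \<times> real) set"
  assumes "convex C" "w0 \<in> C" "w \<in> C"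
    and min: "\<And>w. w \<in> C \<Longrightarrow> (norm (fst w0))\<^sup>2 + snd w0 \<le> (norm (fst w))\<^sup>2 + snd w"
  shows "0 \<le> (2 *\<^sub>R fst w0, 1) \<bullet> (w - w0)"
    and "(norm (fst w))\<^sup>2 + snd w - ((norm (fst w0))\<^sup>2 + snd w0) = (vnorm (2 *\<^sub>R fst w0) (w - w0))\<^sup>2"
proof -
  define d where "d = w - w0"
  define g where "g = (2 *\<^sub>R fst w0, 1) \<bullet> d"
  have expand: "(norm (fst (w0 + t *\<^sub>R d)))\<^sup>2 + snd (w0 + t *\<^sub>R d) - ((norm (fst w0))\<^sup>2 + snd w0)
      = t * g + t\<^sup>2 * (norm (fst d))\<^sup>2" for t
    unfolding power2_norm_eq_inner
    by (simp add: g_def inner_add_left inner_add_right inner_prod_def power2_eq_square algebra_simps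
        inner_commute)
  have "0 \<le> t * g + t\<^sup>2 * (norm (fst d))\<^sup>2" if "0 < t" "t \<le> 1" for t
  proof -
    have "w0 + t *\<^sub>R d \<in> C"
      using convexD_alt[OF assms(1,2,3), of t] that by (simp add: d_def algebra_simps)
    thus ?thesis using min expand[of t] by fastforce
  qed
  hence "0 \<le> g" by (rule nonneg_quadratic_imp_linear_coeff_nonneg[OF _ zero_le_power2])
  thus "0 \<le> (2 *\<^sub>R fst w0, 1) \<bullet> (w - w0)" by (simp add: g_def d_def)
  show "(norm (fst w))\<^sup>2 + snd w - ((norm (fst w0))\<^sup>2 + snd w0) = (vnorm (2 *\<^sub>R fst w0) (w - w0))\<^sup>2"
    using expand[of 1] \<open>0 \<le> g\<close> by (simp add: vnorm_eq g_def d_def)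
qed

lemma lifted_minimizer_vnorm_growth:
  fixes p :: "'n::finite \<Rightarrow> (real^'k) \<times> real"
  assumes lift: "\<And>x. 2 * f (A *v x) = (norm (fst (comb p x)))\<^sup>2 + snd (comb p x)"
    and z0: "z0 \<in> std_simplex" and min: "\<And>x. x \<in> std_simplex \<Longrightarrow> f (A *v z0) \<le> f (A *v x)"
  shows "vnorm_growth f A p (2 *\<^sub>R fst (comb p z0)) z0"
proof
  define C where "C = convex hull (range p)"
  have C: "convex C" "\<And>x. x \<in> std_simplex \<Longrightarrow> comb p x \<in> C"
    by (simp add: C_def) (simp add: C_def convex_hull_range_eq_comb_image)
  have "(norm (fst (comb p z0)))\<^sup>2 + snd (comb p z0) \<le> (norm (fst w))\<^sup>2 + snd w" if "w \<in> C" for w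
    using that min by (auto simp: C_def convex_hull_range_eq_comb_image simp flip: lift)
  note opt = sq_norm_plus_last_min[OF C(1) C(2)[OF z0] C(2) this]
  show "z0 \<in> std_simplex" by (rule z0)
  show "2 * (f (A *v x) - f (A *v z0)) = (vnorm (2 *\<^sub>R fst (comb p z0)) (comb p x - comb p z0))\<^sup>2"
    if "x \<in> std_simplex" for x
    using opt(2)[OF that] by (simp add: right_diff_distrib lift)
  show "(2 *\<^sub>R fst (comb p z0), 1) \<bullet> comb p z0 \<le> (2 *\<^sub>R fst (comb p z0), 1) \<bullet> comb p x"
    if "x \<in> std_simplex" for x
    using opt(1)[OF that] by (simp add: inner_diff_right)
qed

lemma quadratic_argmin_vnorm_growth:
  assumes "sym_psd Q" "\<And>u. f u = 1/2 * ((Q *v u) \<bullet> u) + b \<bullet> u"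
    and u: "u \<in> convA A" "\<And>u'. u' \<in> convA A \<Longrightarrow> f u \<le> f u'"
  shows "\<exists>z0. u = A *v z0 \<and> vnorm_growth f A (\<lambda>j. (psd_sqrt Q *v column j A, 2 * (b \<bullet> column j A)))
                               (2 *\<^sub>R (psd_sqrt Q *v u)) z0"
proof -
  define Abar where "Abar = (\<lambda>j. (psd_sqrt Q *v column j A, 2 * (b \<bullet> column j A)))"
  obtain z0 where z0: "z0 \<in> std_simplex" "u = A *v z0" using u(1) by (auto simp: convA_def)
  have "vnorm_growth f A Abar (2 *\<^sub>R fst (comb Abar z0)) z0"
  proof (rule lifted_minimizer_vnorm_growth[OF _ z0(1)])
    show "2 * f (A *v x) = (norm (fst (comb Abar x)))\<^sup>2 + snd (comb Abar x)" for x
      using assms(1,2) by (simp add: Abar_def comb_lifted_columns psd_sqrt_quadratic_form)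
    show "f (A *v z0) \<le> f (A *v x)" if "x \<in> std_simplex" for x
      using u(2) that z0(2) by (auto simp: convA_def)
  qed
  thus ?thesis using z0(2) by (auto simp: Abar_def comb_lifted_columns)
qed

theorem corollary4:
  fixes A :: "real^'n^'m" and b :: "real^'m" and Q :: "real^'m^'m"
    and f :: "real^'m \<Rightarrow> real"
  assumes "sym_psd Q"
    and "\<exists>i j. (psd_sqrt Q *v column i A, b \<bullet> column i A)
               \<noteq> (psd_sqrt Q *v column j A, b \<bullet> column j A)"
    and "\<And>u. f u = 1/2 * ((Q *v u) \<bullet> u) + b \<bullet> u"
  shows "let Argmin = {u \<in> convA A. \<forall>u' \<in> convA A. f u \<le> f u'};
             Abar = (\<lambda>j. (psd_sqrt Q *v column j A, 2 * (b \<bullet> column j A)))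
         in (\<forall>u1\<in>Argmin. \<forall>u2\<in>Argmin. 2 *\<^sub>R (psd_sqrt Q *v u1) = 2 *\<^sub>R (psd_sqrt Q *v u2))
          \<and> (\<forall>u\<in>Argmin. let v = 2 *\<^sub>R (psd_sqrt Q *v u) in
               mu_star f A \<ge> ereal ((Phi v Abar)\<^sup>2 / 4) \<and> Phi v Abar > 0)"
proof -
  define S where "S = psd_sqrt Q"
  define Abar where "Abar = (\<lambda>j. (S *v column j A, 2 * (b \<bullet> column j A)))"
  define Argmin where "Argmin = {u \<in> convA A. \<forall>u' \<in> convA A. f u \<le> f u'}"
  have growth: "\<exists>z0. u = A *v z0 \<and> vnorm_growth f A Abar (2 *\<^sub>R (S *v u)) z0" if "u \<in> Argmin" for u
    using that unfolding Argmin_def S_def Abar_def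
    by (intro quadratic_argmin_vnorm_growth[OF assms(1,3)]) auto
  obtain i j where "Abar i \<noteq> Abar j" using assms(2) by (auto simp: Abar_def S_def)
  hence "ereal ((Phi (2 *\<^sub>R (S *v u)) Abar)\<^sup>2 / 4) \<le> mu_star f A \<and> 0 < Phi (2 *\<^sub>R (S *v u)) Abar"
    if "u \<in> Argmin" for u
    using growth[OF that] vnorm_growth.mu_star_ge Phi_pos by blast
  moreover have "2 *\<^sub>R (S *v u1) = 2 *\<^sub>R (S *v u2)" if u: "u1 \<in> Argmin" "u2 \<in> Argmin" for u1 u2
  proof -
    obtain z1 z2 where z: "u1 = A *v z1" "u2 = A *v z2"
      and g: "vnorm_growth f A Abar (2 *\<^sub>R (S *v u1)) z1" "vnorm_growth f A Abar (2 *\<^sub>R (S *v u2)) z2"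
      using growth[OF u(1)] growth[OF u(2)] by blast
    have "f u2 \<le> f u1" using u by (simp add: Argmin_def)
    hence "comb Abar z2 = comb Abar z1"
      using vnorm_growth.minimizer_comb_eq[OF g(1) vnorm_growth.z0_simplex[OF g(2)]] z by simp
    thus ?thesis using z by (simp add: Abar_def comb_lifted_columns)
  qed
  ultimately have "(\<forall>u1\<in>Argmin. \<forall>u2\<in>Argmin. 2 *\<^sub>R (S *v u1) = 2 *\<^sub>R (S *v u2))
      \<and> (\<forall>u\<in>Argmin. ereal ((Phi (2 *\<^sub>R (S *v u)) Abar)\<^sup>2 / 4) \<le> mu_star f A
                         \<and> 0 < Phi (2 *\<^sub>R (S *v u)) Abar)"
    by blast
  thus ?thesis by (simp only: Let_def S_def Abar_def Argmin_def)
qed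

end
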